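(* For all integers $m\ge2$, $G_{m,m-1}(q)=2G_{m,m-2}(q)$ and $H_{m,m-1}(q)=2H_{m,m-2}(q)$.
   Context: $q$ is an indeterminate with square root $q^{1/2}$, $[k]=\frac{1-q^k}{1-q}$. Let $T_{m,n}(q)=\sum_{k=1}^n(-1)^{n-k}[k]^mq^{\frac m2(n-k)}$. The polynomials $G_{m,j},H_{m,j}\in\mathbb{Z}[q]$ ($m\ge1$, $0\le j\le m-1$) are those (shown to exist by Guo and Zeng, and uniquely determined) such that for all $n\ge1$: $T_{2m,n}(q)=\sum_{k=1}^m(-q^n)^{m-k}\frac{G_{m,m-k}(q)}{\prod_{i=0}^{m-k}(1+q^{m-i})}([n][n+1])^k$, and $T_{2m-1,n}(q)=(-1)^{m+n}H_{m,m-1}(q^{\frac12})\frac{q^{(m-\frac12)n}}{(1+q^{\frac12})^m\prod_{i=0}^{m-1}(1+q^{m-i-\frac12})}+\frac{1-q^{n+\frac12}}{1-q^{\frac12}}\sum_{k=1}^m(-q^n)^{m-k}\frac{H_{m,m-k}(q^{\frac12})([n][n+1])^{k-1}}{(1+q^{\frac12})^{m-k+1}\prod_{i=0}^{m-k}(1+q^{m-i-\frac12})}$. *)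

theory Defs
  imports "HOL-Computational_Algebra.Polynomial" "HOL-Computational_Algebra.Fraction_Field"
begin

text \<open>We work in the field of fractions of Z[s], where s plays the role of q^(1/2),
  so q = s^2.  All identities of the paper are identities of rational functions in q^(1/2).\<close>

type_synonym rf = "int poly fract"

definition qh :: rf where "qh = Fract [:0, 1:] 1"

definition qq :: rf where "qq = qh ^ 2"

definition qint :: "nat \<Rightarrow> rf" where
  "qint k = (1 - qq ^ k) / (1 - qq)"

definition evp :: "int poly \<Rightarrow> rf \<Rightarrow> rf" where
  "evp p x = poly (map_poly of_int p) x"

text \<open>T_{m,n}(q), with q^{m(n-k)/2} = (q^(1/2))^{m(n-k)}.\<close>
definition T :: "nat \<Rightarrow> nat \<Rightarrow> rf" where
  "T m n = (\<Sum>k=1..n. (-1) ^ (n - k) * qint k ^ m * qh ^ (m * (n - k)))"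

text \<open>The defining identity for the family G_{m,0},...,G_{m,m-1} (G j = G_{m,j}).\<close>
definition is_GZ_G :: "nat \<Rightarrow> (nat \<Rightarrow> int poly) \<Rightarrow> bool" where
  "is_GZ_G m G \<longleftrightarrow> (\<forall>n\<ge>1.
     T (2 * m) n =
       (\<Sum>k=1..m. (- (qq ^ n)) ^ (m - k) * evp (G (m - k)) qq
          / (\<Prod>i=0..m-k. 1 + qq ^ (m - i)) * (qint n * qint (n + 1)) ^ k))"

text \<open>The defining identity for the family H_{m,0},...,H_{m,m-1} (H j = H_{m,j}).
  Here q^{(m-1/2)n} = s^{(2m-1)n}, q^{m-i-1/2} = s^{2(m-i)-1}, q^{n+1/2} = s^{2n+1}.\<close>
definition is_GZ_H :: "nat \<Rightarrow> (nat \<Rightarrow> int poly) \<Rightarrow> bool" where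
  "is_GZ_H m H \<longleftrightarrow> (\<forall>n\<ge>1.
     T (2 * m - 1) n =
       (-1) ^ (m + n) * evp (H (m - 1)) qh * qh ^ ((2 * m - 1) * n)
         / ((1 + qh) ^ m * (\<Prod>i=0..m-1. 1 + qh ^ (2 * (m - i) - 1)))
       + (1 - qh ^ (2 * n + 1)) / (1 - qh) *
         (\<Sum>k=1..m. (- (qq ^ n)) ^ (m - k) * evp (H (m - k)) qh
            * (qint n * qint (n + 1)) ^ (k - 1)
            / ((1 + qh) ^ (m - k + 1) * (\<Prod>i=0..m-k. 1 + qh ^ (2 * (m - i) - 1)))))"

end

theory Submission
  imports Defs
begin

text \<open>Put y = q^n.  Since [n][n+1] = (1 - y)(1 - q y)/(1 - q)^2, the expansion of T_{2m,n}
  reads T_{2m,n} = F(q^n) for a polynomial F built from the G_{m,j}; for T_{2m-1,n} the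
  same holds up to the first term, which solves the homogeneous recurrence.  Splitting off
  the last summand of T_{k,n+1} gives T_{k,n+1} + q^{k/2} T_{k,n} = [n+1]^k, and since
  infinitely many q^n are distinct this becomes the polynomial identity
  F(y) + q^{k/2} F(y/q) = ((1 - y)/(1 - q))^k.
  Both [n][n+1] and its shift y -> y/q vanish at y = 1, so modulo (1 - y)^3 (even case)
  resp. (1 - y)^2 (odd case) only the two summands carrying G_{m,m-1} and G_{m,m-2}
  survive.  Their sum factors as (1 - y)^2 (resp. (1 - y)) times an explicit polynomial,
  which must vanish at y = 1; that is exactly the relation between the two coefficients.
  Since q^(1/2) is transcendental over the integers, the relation lifts from the values
  of G_{m,j} and H_{m,j} to the polynomials themselves.\<close>

lemma poly_eqI_infinite:
  fixes p r :: "'a::idom poly"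
  assumes "infinite (UNIV :: 'a set)" "\<And>x. poly p x = poly r x"
  shows "p = r"
  using poly_roots_finite[of "p - r"] assms by auto

lemma one_minus_dvd_iff: "[:1, -1:] dvd p \<longleftrightarrow> poly p (1::'a::comm_ring_1) = 0"
proof -
  have "[:1, -1:] = - [:-1, 1::'a:]" by simp
  then show ?thesis by (simp only: minus_dvd_iff poly_eq_0_iff_dvd)
qed

lemma poly_eq_0_if_mult_dvd_mult:
  fixes D E p :: "'a::idom poly"
  assumes "E * D dvd E * p" "E \<noteq> 0" "poly D a = 0"
  shows "poly p a = 0"
proof -
  have "D dvd p" using assms(1,2) by simp
  then show ?thesis using assms(3) by (auto elim: dvdE)
qed

lemma pcompose_power: "pcompose (p ^ n) r = pcompose p r ^ n"
  by (induction n) (simp_all add: pcompose_1 pcompose_mult)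

lemma functional_equation_from_recurrence:
  fixes q :: "'a::field"
  assumes "inj (\<lambda>n::nat. q ^ n)"
    and "\<And>n. n \<ge> 1 \<Longrightarrow> poly F (q ^ n) = t n"
    and "\<And>n. n \<ge> 1 \<Longrightarrow> t (Suc n) + \<mu> * t n = poly R (q ^ Suc n)"
  shows "F + smult \<mu> (pcompose F [:0, 1 / q:]) = R"
proof -
  have "q \<noteq> 0"
    using injD[OF assms(1), of 1 2] by auto
  let ?P = "F + smult \<mu> (pcompose F [:0, 1 / q:]) - R"
  have "poly ?P (q ^ Suc n) = 0" if "n \<ge> 1" for n
    using assms(2)[OF that] assms(2)[of "Suc n"] assms(3)[OF that] \<open>q \<noteq> 0\<close> that
    by (simp add: poly_pcompose)
  then have "(\<lambda>n. q ^ Suc n) ` {1..} \<subseteq> {x. poly ?P x = 0}" by auto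
  moreover have "inj_on (\<lambda>n. q ^ Suc n) {1..}"
    by (intro inj_onI) (metis injD[OF assms(1)] Suc_inject)
  then have "infinite ((\<lambda>n. q ^ Suc n) ` {1..})"
    using finite_imageD infinite_Ici by blast
  ultimately have "?P = 0"
    using poly_roots_finite[of ?P] finite_subset by blast
  then show ?thesis by simp
qed

definition qint_pair_poly :: "'a::field \<Rightarrow> 'a poly" where
  "qint_pair_poly q = smult (1 / (1 - q) ^ 2) ([:1, -1:] * [:1, -q:])"

lemma poly_qint_pair_poly_eq: "poly (qint_pair_poly q) y = (1 - y) * (1 - q * y) / (1 - q) ^ 2"
proof -
  have "poly ([:1, -1:] * [:1, -q:]) y = (1 - y) * (1 - q * y)" by (simp add: algebra_simps)
  then show ?thesis unfolding qint_pair_poly_def by (simp only: poly_smult) simp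
qed

lemma poly_qint_pair_poly_pcompose:
  assumes "q \<noteq> 0"
  shows "q * poly (pcompose (qint_pair_poly q) [:0, 1 / q:]) y = (q - y) * (1 - y) / (1 - q) ^ 2"
proof -
  have "q * (1 - y / q) = q - y" "q * (y / q) = y" using assms by (simp_all add: field_simps)
  then show ?thesis by (simp add: poly_pcompose poly_qint_pair_poly_eq mult.assoc[symmetric])
qed

lemma one_minus_dvd_qint_pair_poly:
  assumes "q \<noteq> 0"
  shows "[:1, -1:] dvd qint_pair_poly q" "[:1, -1:] dvd pcompose (qint_pair_poly q) [:0, 1 / q:]"
  using poly_qint_pair_poly_pcompose[OF assms, of 1] assms
  by (simp_all add: one_minus_dvd_iff poly_qint_pair_poly_eq)

text \<open>With W = -y and Y = qint_pair_poly q this is the sum in the expansions of T, c k being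
  the coefficient of ([n][n+1])^(k-1).\<close>

definition gz_poly :: "'a::comm_ring_1 poly \<Rightarrow> 'a poly \<Rightarrow> nat \<Rightarrow> (nat \<Rightarrow> 'a) \<Rightarrow> 'a poly" where
  "gz_poly W Y m c = (\<Sum>k=1..m. smult (c k) (W ^ (m - k) * Y ^ (k - 1)))"

definition gz_linear_part :: "'a::comm_ring_1 poly \<Rightarrow> 'a poly \<Rightarrow> nat \<Rightarrow> (nat \<Rightarrow> 'a) \<Rightarrow> 'a poly" where
  "gz_linear_part W Y m c = smult (c 1) (W ^ (m - 1)) + smult (c 2) (W ^ (m - 2) * Y)"

lemma pcompose_gz_poly: "pcompose (gz_poly W Y m c) r = gz_poly (pcompose W r) (pcompose Y r) m c"
  by (simp add: gz_poly_def pcompose_sum pcompose_smult pcompose_mult pcompose_power)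

lemma poly_gz_linear_part:
  "poly (gz_linear_part W Y (j + 2) c) y = poly W y ^ j * (c 1 * poly W y + c 2 * poly Y y)"
  by (simp add: gz_linear_part_def algebra_simps)

lemma poly_gz_linear_part_scaled:
  fixes q :: "'a::field"
  assumes "q \<noteq> 0"
  shows "q ^ (j + 1) * poly (gz_linear_part (pcompose [:0, -1:] [:0, 1 / q:]) Y (j + 2) c) y
       = (- y) ^ j * (c 2 * (q * poly Y y) - c 1 * y)"
proof -
  define w where "w = - y"
  have pW: "poly (pcompose [:0, -1:] [:0, 1 / q:]) y = w / q" by (simp add: w_def poly_pcompose)
  have "q ^ (j + 1) * poly (gz_linear_part (pcompose [:0, -1:] [:0, 1 / q:]) Y (j + 2) c) y
      = q ^ (j + 1) * ((w / q) ^ j * (c 1 * (w / q) + c 2 * poly Y y))"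
    unfolding poly_gz_linear_part pW ..
  also have "\<dots> = w ^ j * (c 1 * w + c 2 * (q * poly Y y))"
    using assms by (simp add: power_divide field_simps)
  also have "\<dots> = (- y) ^ j * (c 2 * (q * poly Y y) - c 1 * y)"
    by (simp add: w_def algebra_simps)
  finally show ?thesis .
qed

lemma poly_gz_linear_part_combination:
  fixes q t :: "'a::field"
  assumes "q \<noteq> 0"
  defines "r \<equiv> [:0, 1 / q:]"
  shows "poly (L * gz_linear_part [:0, -1:] X (j + 2) c
            + smult (t * q ^ (j + 1))
                (pcompose L r * gz_linear_part (pcompose [:0, -1:] r) (pcompose X r) (j + 2) c)) y
       = (- y) ^ j * (c 2 * (poly L y * poly X y + t * poly (pcompose L r) y * (q * poly (pcompose X r) y))
                      - c 1 * y * (poly L y + t * poly (pcompose L r) y))"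
proof -
  have "poly (L * gz_linear_part [:0, -1:] X (j + 2) c
            + smult (t * q ^ (j + 1))
                (pcompose L r * gz_linear_part (pcompose [:0, -1:] r) (pcompose X r) (j + 2) c)) y
      = poly L y * poly (gz_linear_part [:0, -1:] X (j + 2) c) y + t * poly (pcompose L r) y
          * (q ^ (j + 1) * poly (gz_linear_part (pcompose [:0, -1:] r) (pcompose X r) (j + 2) c) y)"
    by (simp add: mult_ac)
  also have "\<dots> = poly L y * ((- y) ^ j * (c 2 * poly X y - c 1 * y)) + t * poly (pcompose L r) y
          * ((- y) ^ j * (c 2 * (q * poly (pcompose X r) y) - c 1 * y))"
    unfolding r_def poly_gz_linear_part_scaled[OF assms(1)] unfolding poly_gz_linear_part
    by (simp add: algebra_simps)
  also have "\<dots> = (- y) ^ j * (c 2 * (poly L y * poly X y + t * poly (pcompose L r) y * (q * poly (pcompose X r) y))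
                      - c 1 * y * (poly L y + t * poly (pcompose L r) y))"
    by (simp add: algebra_simps)
  finally show ?thesis .
qed

lemma gz_poly_minus_linear_part_dvd:
  assumes "D dvd Y" "2 \<le> m"
  shows "D ^ 2 dvd gz_poly W Y m c - gz_linear_part W Y m c"
proof -
  have "{1..m} = insert 1 (insert 2 {3..m})" using assms(2) by auto
  then have "gz_poly W Y m c - gz_linear_part W Y m c
      = (\<Sum>k=3..m. smult (c k) (W ^ (m - k) * Y ^ (k - 1)))"
    by (simp add: gz_poly_def gz_linear_part_def)
  also have "D ^ 2 dvd \<dots>"
  proof (rule dvd_sum)
    fix k assume "k \<in> {3..m}"
    then have "Y ^ 2 dvd Y ^ (k - 1)" by (intro le_imp_power_dvd) auto
    then have "D ^ 2 dvd Y ^ (k - 1)" using assms(1) by (meson dvd_power_same dvd_trans)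
    then show "D ^ 2 dvd smult (c k) (W ^ (m - k) * Y ^ (k - 1))" by (simp add: dvd_smult)
  qed
  finally show ?thesis .
qed

lemma gz_linear_part_dvd:
  fixes L X W r :: "'a::comm_ring_1 poly"
  assumes "D ^ k dvd L" "D ^ k dvd pcompose L r" "D dvd X" "D dvd pcompose X r" "2 \<le> m"
    and "D ^ (k + 2) dvd L * gz_poly W X m c + smult \<mu> (pcompose (L * gz_poly W X m c) r)"
  shows "D ^ (k + 2) dvd L * gz_linear_part W X m c
           + smult \<mu> (pcompose L r * gz_linear_part (pcompose W r) (pcompose X r) m c)"
proof -
  have rest: "D ^ (k + 2) dvd M * (gz_poly V Y m c - gz_linear_part V Y m c)"
    if "D ^ k dvd M" "D dvd Y" for M V Y
    using mult_dvd_mono[OF that(1) gz_poly_minus_linear_part_dvd[OF that(2) assms(5), of V c]]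
    by (simp add: power_add power2_eq_square mult_ac)
  have "L * gz_poly W X m c + smult \<mu> (pcompose (L * gz_poly W X m c) r)
      = (L * gz_linear_part W X m c
          + smult \<mu> (pcompose L r * gz_linear_part (pcompose W r) (pcompose X r) m c))
        + (L * (gz_poly W X m c - gz_linear_part W X m c)
           + smult \<mu> (pcompose L r * (gz_poly (pcompose W r) (pcompose X r) m c
                                      - gz_linear_part (pcompose W r) (pcompose X r) m c)))"
    by (simp add: pcompose_mult pcompose_gz_poly smult_diff_right algebra_simps)
  then show ?thesis
    using assms(6) rest[OF assms(1,3)] rest[OF assms(2,4)]
    by (metis dvd_add_left_iff dvd_smult)
qed

lemma even_linear_part_factorization:
  fixes q :: "'a::field"
  assumes "infinite (UNIV :: 'a set)" "q \<noteq> 0"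
  defines "X \<equiv> qint_pair_poly q" and "r \<equiv> [:0, 1 / q:]" and "a \<equiv> 1 / (1 - q) ^ 2"
  shows "X * gz_linear_part [:0, -1:] X (j + 2) c
           + smult (q * q ^ (j + 1)) (pcompose X r * gz_linear_part (pcompose [:0, -1:] r) (pcompose X r) (j + 2) c)
         = [:1, -1:] ^ 2 * ([:0, -1:] ^ j * smult a
             ([:0, - c 1 * (1 + q):] + smult (c 2 * a) ([:1, -q:] ^ 2 + [:q, -1:] ^ 2)))"
    (is "?P = [:1, -1:] ^ 2 * ([:0, -1:] ^ j * ?B)")
proof (rule poly_eqI_infinite[OF assms(1)])
  fix y :: 'a
  have pX: "poly X y = a * ((1 - y) * (1 - q * y))"
    by (simp add: X_def a_def poly_qint_pair_poly_eq)
  have pXr: "q * poly (pcompose X r) y = a * ((q - y) * (1 - y))"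
    using assms(2) by (simp add: X_def r_def a_def poly_qint_pair_poly_pcompose)
  have "poly ?P y = (- y) ^ j * (c 2 * (poly X y * poly X y + q * poly (pcompose X r) y * (q * poly (pcompose X r) y))
                      - c 1 * y * (poly X y + q * poly (pcompose X r) y))"
    unfolding r_def by (rule poly_gz_linear_part_combination[OF assms(2)])
  also have "\<dots> = (1 - y) ^ 2 * ((- y) ^ j * poly ?B y)"
    unfolding pX pXr by (simp add: algebra_simps power2_eq_square)
  also have "\<dots> = poly ([:1, -1:] ^ 2 * ([:0, -1:] ^ j * ?B)) y"
    by simp
  finally show "poly ?P y = poly ([:1, -1:] ^ 2 * ([:0, -1:] ^ j * ?B)) y" .
qed

lemma even_coeff_relation:
  fixes q :: "'a::field" and c :: "nat \<Rightarrow> 'a"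
  assumes inf: "infinite (UNIV :: 'a set)" and q: "q \<noteq> 0" "q \<noteq> 1" and m: "2 \<le> m"
    and F: "F = qint_pair_poly q * gz_poly [:0, -1:] (qint_pair_poly q) m c"
    and dvd: "[:1, -1:] ^ 3 dvd F + smult (q ^ m) (pcompose F [:0, 1 / q:])"
  shows "c 1 * (1 + q) = 2 * c 2"
proof -
  obtain j where j: "m = j + 2" using m by (metis add.commute le_Suc_ex)
  define D where "D = [:1, -1::'a:]"
  define X where "X = qint_pair_poly q"
  define r where "r = [:0, 1 / q:]"
  define a where "a = 1 / (1 - q) ^ 2"
  define B where "B = smult a ([:0, - c 1 * (1 + q):] + smult (c 2 * a) ([:1, -q:] ^ 2 + [:q, -1:] ^ 2))"
  have "D ^ (1 + 2) dvd X * gz_linear_part [:0, -1:] X m c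
      + smult (q ^ m) (pcompose X r * gz_linear_part (pcompose [:0, -1:] r) (pcompose X r) m c)"
  proof (rule gz_linear_part_dvd)
    show "D dvd X" "D dvd pcompose X r"
      unfolding D_def X_def r_def using q(1) by (rule one_minus_dvd_qint_pair_poly)+
    then show "D ^ 1 dvd X" "D ^ 1 dvd pcompose X r" by simp_all
    have "(1::nat) + 2 = 3" by simp
    then show "D ^ (1 + 2) dvd X * gz_poly [:0, -1:] X m c
        + smult (q ^ m) (pcompose (X * gz_poly [:0, -1:] X m c) r)"
      using dvd by (simp only: F D_def X_def r_def)
  qed (rule m)
  also have "q ^ m = q * q ^ (j + 1)" using j by simp
  also have "X * gz_linear_part [:0, -1:] X m c
      + smult (q * q ^ (j + 1)) (pcompose X r * gz_linear_part (pcompose [:0, -1:] r) (pcompose X r) m c)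
      = D ^ 2 * ([:0, -1:] ^ j * B)"
    unfolding j D_def X_def r_def B_def a_def using inf q(1) by (rule even_linear_part_factorization)
  also have "D ^ (1 + 2) = D ^ 2 * D" by (simp add: power2_eq_square power3_eq_cube)
  finally have "poly ([:0, -1:] ^ j * B) 1 = 0"
    by (rule poly_eq_0_if_mult_dvd_mult) (simp_all add: D_def)
  then have "poly B 1 = 0" by simp
  moreover have "poly B 1 = a * (2 * c 2 * (a * (1 - q) ^ 2) - c 1 * (1 + q))"
    by (simp add: B_def algebra_simps power2_eq_square)
  moreover have "a \<noteq> 0" "a * (1 - q) ^ 2 = 1" using q by (simp_all add: a_def)
  ultimately show ?thesis by simp
qed

lemma odd_linear_part_factorization:
  fixes s q :: "'a::field"
  assumes "infinite (UNIV :: 'a set)" "s \<noteq> 0" "q = s ^ 2"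
  defines "X \<equiv> qint_pair_poly q" and "r \<equiv> [:0, 1 / q:]" and "e \<equiv> 1 / (1 - s)"
    and "a \<equiv> 1 / (1 - q) ^ 2"
  shows "smult e [:1, -s:] * gz_linear_part [:0, -1:] X (j + 2) d
           + smult (s * q ^ (j + 1))
               (pcompose (smult e [:1, -s:]) r * gz_linear_part (pcompose [:0, -1:] r) (pcompose X r) (j + 2) d)
         = [:1, -1:] * ([:0, -1:] ^ j * smult e
             ([:0, - d 1 * (1 + s):] + smult (d 2 * a) ([:1, -s:] * [:1, -q:] + [:s, -1:] * [:q, -1:])))"
    (is "?P = [:1, -1:] * ([:0, -1:] ^ j * ?B)")
proof (rule poly_eqI_infinite[OF assms(1)])
  fix y :: 'a
  have q: "q \<noteq> 0" using assms(2,3) by simp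
  have pX: "poly X y = a * ((1 - y) * (1 - q * y))"
    by (simp add: X_def a_def poly_qint_pair_poly_eq)
  have pXr: "q * poly (pcompose X r) y = a * ((q - y) * (1 - y))"
    using q by (simp add: X_def r_def a_def poly_qint_pair_poly_pcompose)
  have pL: "poly (smult e [:1, -s:]) y = e * (1 - s * y)"
    by (simp add: algebra_simps)
  have pLr: "s * poly (pcompose (smult e [:1, -s:]) r) y = e * (s - y)"
    using assms(2) by (simp add: r_def poly_pcompose assms(3) power2_eq_square field_simps)
  have "poly ?P y = (- y) ^ j * (d 2 * (poly (smult e [:1, -s:]) y * poly X y
          + s * poly (pcompose (smult e [:1, -s:]) r) y * (q * poly (pcompose X r) y))
        - d 1 * y * (poly (smult e [:1, -s:]) y + s * poly (pcompose (smult e [:1, -s:]) r) y))"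
    unfolding r_def by (rule poly_gz_linear_part_combination[OF q])
  also have "\<dots> = (1 - y) * ((- y) ^ j * poly ?B y)"
    unfolding pL pLr pX pXr by (simp add: algebra_simps)
  also have "\<dots> = poly ([:1, -1:] * ([:0, -1:] ^ j * ?B)) y"
  proof -
    have "poly [:1, -1:] y = 1 - y" "poly [:0, -1:] y = - y" by simp_all
    then show ?thesis by (simp only: poly_mult poly_power)
  qed
  finally show "poly ?P y = poly ([:1, -1:] * ([:0, -1:] ^ j * ?B)) y" .
qed

lemma odd_coeff_relation:
  fixes s :: "'a::field" and d :: "nat \<Rightarrow> 'a"
  assumes inf: "infinite (UNIV :: 'a set)" and s: "s \<noteq> 0" "s ^ 2 \<noteq> 1" and m: "2 \<le> m"
    and F: "F = smult (1 / (1 - s)) [:1, -s:] * gz_poly [:0, -1:] (qint_pair_poly (s ^ 2)) m d"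
    and dvd: "[:1, -1:] ^ 2 dvd F + smult (s ^ (2 * m - 1)) (pcompose F [:0, 1 / s ^ 2:])"
  shows "d 1 * (1 + s) ^ 2 = 2 * d 2"
proof -
  obtain j where j: "m = j + 2" using m by (metis add.commute le_Suc_ex)
  define q where "q = s ^ 2"
  define D where "D = [:1, -1::'a:]"
  define X where "X = qint_pair_poly q"
  define r where "r = [:0, 1 / q:]"
  define e where "e = 1 / (1 - s)"
  define L where "L = smult e [:1, -s:]"
  define a where "a = 1 / (1 - q) ^ 2"
  define B where "B = smult e ([:0, - d 1 * (1 + s):]
      + smult (d 2 * a) ([:1, -s:] * [:1, -q:] + [:s, -1:] * [:q, -1:]))"
  have "s \<noteq> - 1" using s(2) by auto
  then have q: "q \<noteq> 0" "1 + s \<noteq> 0" "1 - s \<noteq> 0" "1 - q = (1 - s) * (1 + s)"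
    using s by (auto simp: q_def power2_eq_square algebra_simps eq_neg_iff_add_eq_0)
  have a_eq: "a * (1 - s) * (1 - q) = 1 / (1 + s)"
    using q by (simp add: a_def power2_eq_square)
  have "D ^ (0 + 2) dvd L * gz_linear_part [:0, -1:] X m d
      + smult (s ^ (2 * m - 1)) (pcompose L r * gz_linear_part (pcompose [:0, -1:] r) (pcompose X r) m d)"
  proof (rule gz_linear_part_dvd)
    show "D dvd X" "D dvd pcompose X r"
      unfolding D_def X_def r_def using q(1) by (rule one_minus_dvd_qint_pair_poly)+
    show "D ^ (0 + 2) dvd L * gz_poly [:0, -1:] X m d
        + smult (s ^ (2 * m - 1)) (pcompose (L * gz_poly [:0, -1:] X m d) r)"
      using dvd by (simp only: F D_def X_def r_def L_def e_def q_def add_0)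
  qed (simp_all add: m)
  also have "s ^ (2 * m - 1) = s * q ^ (j + 1)"
  proof -
    have "2 * m - 1 = Suc (2 * (j + 1))" using j by simp
    then show ?thesis by (simp only: q_def power_Suc power_mult)
  qed
  also have "L * gz_linear_part [:0, -1:] X m d
      + smult (s * q ^ (j + 1)) (pcompose L r * gz_linear_part (pcompose [:0, -1:] r) (pcompose X r) m d)
      = D * ([:0, -1:] ^ j * B)"
    unfolding j D_def X_def r_def L_def B_def a_def e_def using inf s(1) q_def
    by (rule odd_linear_part_factorization)
  also have "D ^ (0 + 2) = D * D" by (simp add: power2_eq_square)
  finally have "poly ([:0, -1:] ^ j * B) 1 = 0"
    by (rule poly_eq_0_if_mult_dvd_mult) (simp_all add: D_def)
  then have "poly B 1 = 0" by simp
  moreover have "poly B 1 = e * (2 * d 2 * (1 / (1 + s)) - d 1 * (1 + s))"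
    unfolding a_eq[symmetric] by (simp add: B_def algebra_simps)
  moreover have "e \<noteq> 0" using q(3) by (simp add: e_def)
  ultimately have "2 * d 2 * (1 / (1 + s)) = d 1 * (1 + s)" by simp
  then show ?thesis using q(2) by (simp add: field_simps power2_eq_square)
qed

lemma qh_power: "qh ^ k = Fract ([:0, 1:] ^ k) 1"
  by (induction k) (simp_all add: qh_def One_fract_def)

lemma qh_power_even: "qh ^ (2 * k) = qq ^ k"
  by (simp add: qq_def power_mult)

lemma inj_qh_power: "inj (\<lambda>k::nat. qh ^ k)"
proof (rule injI)
  fix k l :: nat
  assume "qh ^ k = qh ^ l"
  then have "([:0, 1:] ^ k :: int poly) = [:0, 1:] ^ l" by (simp add: qh_power eq_fract)
  then have "degree ([:0, 1:] ^ k :: int poly) = degree ([:0, 1:] ^ l :: int poly)" by simp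
  then show "k = l" by (simp add: degree_power_eq)
qed

lemma inj_qq_power: "inj (\<lambda>n::nat. qq ^ n)"
  using inj_qh_power by (auto intro!: injI simp: qh_power_even[symmetric] dest: injD)

lemma infinite_UNIV_rf: "infinite (UNIV :: rf set)"
  by (rule infinite_super[OF subset_UNIV range_inj_infinite[OF inj_qh_power]])

lemma qh_neq: "qh \<noteq> 0" "qh ^ 2 \<noteq> 1"
  using injD[OF inj_qh_power, of 1 2] injD[OF inj_qh_power, of 2 0] by auto

lemma qq_neq: "qq \<noteq> 0" "qq \<noteq> 1"
  using qh_neq by (simp_all add: qq_def)

lemma one_plus_qh_power_neq_0: "1 + qh ^ k \<noteq> 0"
proof -
  have "poly (1 + [:0, 1:] ^ k :: int poly) 0 \<noteq> 0" by (cases k) simp_all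
  then have "(1 + [:0, 1:] ^ k :: int poly) \<noteq> 0" by (metis poly_0)
  then show ?thesis by (simp add: qh_power One_fract_def eq_fract Zero_fract_def)
qed

lemma one_plus_qq_power_neq_0: "1 + qq ^ k \<noteq> 0"
  using one_plus_qh_power_neq_0[of "2 * k"] by (simp add: qh_power_even)

lemma evp_Fract: "evp p (Fract r 1) = Fract (pcompose p r) 1"
proof (induction p rule: pCons_induct)
  case 0
  then show ?case by (simp add: evp_def Zero_fract_def)
next
  case (pCons a p)
  have "(of_int a :: rf) = Fract [:a:] 1"
    by (cases a rule: int_cases2) (simp_all add: of_nat_fract of_nat_poly)
  with pCons.IH show ?case
    by (simp add: evp_def map_poly_pCons pcompose_pCons)
qed

lemma inj_evp_Fract:
  assumes "degree r > 0"
  shows "inj (\<lambda>p. evp p (Fract r 1))"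
proof (rule injI)
  fix p p' assume "evp p (Fract r 1) = evp p' (Fract r 1)"
  then have "pcompose (p - p') r = 0" by (simp add: evp_Fract eq_fract pcompose_diff)
  then have "p - p' = 0" using assms by (rule pcompose_eq_0)
  then show "p = p'" by simp
qed

lemma inj_evp_qh: "inj (\<lambda>p. evp p qh)"
  using inj_evp_Fract[of "[:0, 1:]"] by (simp add: qh_def)

lemma inj_evp_qq: "inj (\<lambda>p. evp p qq)"
  using inj_evp_Fract[of "[:0, 0, 1:]"] by (simp add: qq_def qh_def power2_eq_square)

lemma evp_double: "evp (2 * p) x = 2 * evp p x"
proof -
  have "2 * p = smult 2 p" by (simp add: numeral_poly)
  then show ?thesis by (simp add: evp_def map_poly_smult)
qed

lemma T_Suc: "T k (Suc n) + qh ^ k * T k n = qint (Suc n) ^ k"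
proof -
  have "T k (Suc n) = qint (Suc n) ^ k
      + (\<Sum>i=1..n. (-1) ^ (Suc n - i) * qint i ^ k * qh ^ (k * (Suc n - i)))"
    unfolding T_def by (simp add: add.commute)
  also have "(\<Sum>i=1..n. (-1) ^ (Suc n - i) * qint i ^ k * qh ^ (k * (Suc n - i))) = - (qh ^ k * T k n)"
    unfolding T_def sum_distrib_left sum_negf[symmetric]
    by (rule sum.cong) (auto simp: Suc_diff_le power_add mult_ac)
  finally show ?thesis by simp
qed

lemma qint_power_eq_poly: "qint n ^ N = poly (smult (1 / (1 - qq) ^ N) ([:1, -1:] ^ N)) (qq ^ n)"
  by (simp add: qint_def power_divide)

lemma poly_qint_pair_poly_qq: "poly (qint_pair_poly qq) (qq ^ n) = qint n * qint (Suc n)"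
  by (simp add: poly_qint_pair_poly_eq qint_def power2_eq_square)

definition G_coeff :: "nat \<Rightarrow> (nat \<Rightarrow> int poly) \<Rightarrow> nat \<Rightarrow> rf" where
  "G_coeff m G k = evp (G (m - k)) qq / (\<Prod>i=0..m-k. 1 + qq ^ (m - i))"

definition G_poly :: "nat \<Rightarrow> (nat \<Rightarrow> int poly) \<Rightarrow> rf poly" where
  "G_poly m G = qint_pair_poly qq * gz_poly [:0, -1:] (qint_pair_poly qq) m (G_coeff m G)"

definition H_coeff :: "nat \<Rightarrow> (nat \<Rightarrow> int poly) \<Rightarrow> nat \<Rightarrow> rf" where
  "H_coeff m H k = evp (H (m - k)) qh
     / ((1 + qh) ^ (m - k + 1) * (\<Prod>i=0..m-k. 1 + qh ^ (2 * (m - i) - 1)))"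

definition H_poly :: "nat \<Rightarrow> (nat \<Rightarrow> int poly) \<Rightarrow> rf poly" where
  "H_poly m H = smult (1 / (1 - qh)) [:1, -qh:] * gz_poly [:0, -1:] (qint_pair_poly qq) m (H_coeff m H)"

definition H_hom :: "nat \<Rightarrow> (nat \<Rightarrow> int poly) \<Rightarrow> nat \<Rightarrow> rf" where
  "H_hom m H n = (-1) ^ (m + n) * evp (H (m - 1)) qh * qh ^ ((2 * m - 1) * n)
     / ((1 + qh) ^ m * (\<Prod>i=0..m-1. 1 + qh ^ (2 * (m - i) - 1)))"

lemma T_even_eq_G_poly:
  assumes "is_GZ_G m G" "n \<ge> 1"
  shows "T (2 * m) n = poly (G_poly m G) (qq ^ n)"
proof -
  define Z where "Z = qint n * qint (Suc n)"
  have "poly (G_poly m G) (qq ^ n) = (\<Sum>k=1..m. (- (qq ^ n)) ^ (m - k) * G_coeff m G k * Z ^ k)"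
    unfolding G_poly_def gz_poly_def poly_mult poly_sum sum_distrib_left
  proof (rule sum.cong[OF refl])
    fix k assume "k \<in> {1..m}"
    then have "Z * Z ^ (k - 1) = Z ^ k" by (cases k) simp_all
    then show "poly (qint_pair_poly qq) (qq ^ n)
          * poly (smult (G_coeff m G k) ([:0, -1:] ^ (m - k) * qint_pair_poly qq ^ (k - 1))) (qq ^ n)
        = (- (qq ^ n)) ^ (m - k) * G_coeff m G k * Z ^ k"
      by (simp add: Z_def poly_qint_pair_poly_qq mult_ac)
  qed
  also have "\<dots> = T (2 * m) n"
    using assms by (simp add: is_GZ_G_def G_coeff_def Z_def)
  finally show ?thesis ..
qed

lemma T_odd_eq_H_poly:
  assumes "is_GZ_H m H" "n \<ge> 1"
  shows "T (2 * m - 1) n = H_hom m H n + poly (H_poly m H) (qq ^ n)"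
proof -
  have qh_odd: "qh ^ (2 * n + 1) = qh * qq ^ n" by (simp add: qh_power_even)
  have lin: "poly (smult (1 / (1 - qh)) [:1, -qh:]) (qq ^ n) = (1 - qh ^ (2 * n + 1)) / (1 - qh)"
    unfolding qh_odd by (simp add: diff_divide_distrib)
  have sum: "poly (gz_poly [:0, -1:] (qint_pair_poly qq) m (H_coeff m H)) (qq ^ n)
      = (\<Sum>k=1..m. (- (qq ^ n)) ^ (m - k) * evp (H (m - k)) qh * (qint n * qint (n + 1)) ^ (k - 1)
           / ((1 + qh) ^ (m - k + 1) * (\<Prod>i=0..m-k. 1 + qh ^ (2 * (m - i) - 1))))"
    by (simp add: H_coeff_def gz_poly_def poly_sum poly_qint_pair_poly_qq mult_ac)
  have "T (2 * m - 1) n = H_hom m H n + (1 - qh ^ (2 * n + 1)) / (1 - qh)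
      * (\<Sum>k=1..m. (- (qq ^ n)) ^ (m - k) * evp (H (m - k)) qh * (qint n * qint (n + 1)) ^ (k - 1)
           / ((1 + qh) ^ (m - k + 1) * (\<Prod>i=0..m-k. 1 + qh ^ (2 * (m - i) - 1))))"
    using assms unfolding is_GZ_H_def H_hom_def by blast
  then show ?thesis unfolding H_poly_def poly_mult lin sum .
qed

lemma H_hom_Suc: "H_hom m H (Suc n) + qh ^ (2 * m - 1) * H_hom m H n = 0"
proof -
  have "qh ^ ((2 * m - 1) * Suc n) = qh ^ (2 * m - 1) * qh ^ ((2 * m - 1) * n)"
    by (simp only: mult_Suc_right power_add)
  then show ?thesis by (simp add: H_hom_def algebra_simps)
qed

lemma G_poly_functional_equation:
  assumes "is_GZ_G m G"
  shows "G_poly m G + smult (qq ^ m) (pcompose (G_poly m G) [:0, 1 / qq:])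
       = smult (1 / (1 - qq) ^ (2 * m)) ([:1, -1:] ^ (2 * m))"
proof (rule functional_equation_from_recurrence[OF inj_qq_power])
  show "poly (G_poly m G) (qq ^ n) = T (2 * m) n" if "n \<ge> 1" for n
    using T_even_eq_G_poly[OF assms that] ..
  show "T (2 * m) (Suc n) + qq ^ m * T (2 * m) n
      = poly (smult (1 / (1 - qq) ^ (2 * m)) ([:1, -1:] ^ (2 * m))) (qq ^ Suc n)" for n
    using T_Suc[of "2 * m" n] qint_power_eq_poly[of "Suc n" "2 * m"] by (simp add: qh_power_even)
qed

lemma H_poly_functional_equation:
  assumes "is_GZ_H m H"
  shows "H_poly m H + smult (qh ^ (2 * m - 1)) (pcompose (H_poly m H) [:0, 1 / qq:])
       = smult (1 / (1 - qq) ^ (2 * m - 1)) ([:1, -1:] ^ (2 * m - 1))"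
proof (rule functional_equation_from_recurrence[OF inj_qq_power])
  show "poly (H_poly m H) (qq ^ n) = T (2 * m - 1) n - H_hom m H n" if "n \<ge> 1" for n
    using T_odd_eq_H_poly[OF assms that] by simp
  show "T (2 * m - 1) (Suc n) - H_hom m H (Suc n) + qh ^ (2 * m - 1) * (T (2 * m - 1) n - H_hom m H n)
      = poly (smult (1 / (1 - qq) ^ (2 * m - 1)) ([:1, -1:] ^ (2 * m - 1))) (qq ^ Suc n)" for n
    using T_Suc[of "2 * m - 1" n] qint_power_eq_poly[of "Suc n" "2 * m - 1"] H_hom_Suc[of m H n]
    by (simp add: algebra_simps)
qed

lemma is_GZ_G_evp_last_eq_double:
  assumes "is_GZ_G m G" and m: "2 \<le> m"
  shows "evp (G (m - 1)) qq = 2 * evp (G (m - 2)) qq"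
proof -
  have "[:1, -1:] ^ 3 dvd G_poly m G + smult (qq ^ m) (pcompose (G_poly m G) [:0, 1 / qq:])"
    unfolding G_poly_functional_equation[OF assms(1)] using m by (intro dvd_smult le_imp_power_dvd) simp
  then have rel: "G_coeff m G 1 * (1 + qq) = 2 * G_coeff m G 2"
    by (rule even_coeff_relation[OF infinite_UNIV_rf qq_neq m G_poly_def])
  define P where "P = (\<Prod>i=0..m-2. 1 + qq ^ (m - i))"
  have den: "(\<Prod>i=0..m-1. 1 + qq ^ (m - i)) = P * (1 + qq)"
    using m by (simp add: P_def Suc_diff_Suc[symmetric] numeral_2_eq_2 prod.atLeast0_atMost_Suc)
  have "evp (G (m - 1)) qq / P = 2 * (evp (G (m - 2)) qq / P)"
    using rel one_plus_qq_power_neq_0[of 1] unfolding G_coeff_def den P_def[symmetric] by simp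
  moreover have "P \<noteq> 0" by (simp add: P_def one_plus_qq_power_neq_0)
  ultimately show ?thesis by (simp add: field_simps)
qed

lemma is_GZ_H_evp_last_eq_double:
  assumes "is_GZ_H m H" and m: "2 \<le> m"
  shows "evp (H (m - 1)) qh = 2 * evp (H (m - 2)) qh"
proof -
  have "[:1, -1:] ^ 2 dvd H_poly m H + smult (qh ^ (2 * m - 1)) (pcompose (H_poly m H) [:0, 1 / qq:])"
    unfolding H_poly_functional_equation[OF assms(1)] using m by (intro dvd_smult le_imp_power_dvd) simp
  then have rel: "H_coeff m H 1 * (1 + qh) ^ 2 = 2 * H_coeff m H 2"
    by (intro odd_coeff_relation[OF infinite_UNIV_rf qh_neq m H_poly_def[unfolded qq_def]])
      (simp add: qq_def)
  define P where "P = (1 + qh) ^ (m - 1) * (\<Prod>i=0..m-2. 1 + qh ^ (2 * (m - i) - 1))"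
  have den1: "(1 + qh) ^ (m - 1 + 1) * (\<Prod>i=0..m-1. 1 + qh ^ (2 * (m - i) - 1)) = P * (1 + qh) ^ 2"
    using m by (simp add: P_def Suc_diff_Suc[symmetric] numeral_2_eq_2 prod.atLeast0_atMost_Suc
        power2_eq_square algebra_simps)
  have "m - 2 + 1 = m - 1" using m by simp
  then have den2: "(1 + qh) ^ (m - 2 + 1) * (\<Prod>i=0..m-2. 1 + qh ^ (2 * (m - i) - 1)) = P"
    by (simp only: P_def)
  have "evp (H (m - 1)) qh / P = 2 * (evp (H (m - 2)) qh / P)"
    using rel one_plus_qh_power_neq_0[of 1] unfolding H_coeff_def den1 den2 by simp
  moreover have "P \<noteq> 0"
    using one_plus_qh_power_neq_0[of 1] by (simp add: P_def one_plus_qh_power_neq_0)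
  ultimately show ?thesis by (simp add: field_simps)
qed

theorem corollary3p9:
  fixes m :: nat
  assumes "m \<ge> 2"
  shows "(\<forall>G. is_GZ_G m G \<longrightarrow> G (m - 1) = 2 * G (m - 2))
       \<and> (\<forall>H. is_GZ_H m H \<longrightarrow> H (m - 1) = 2 * H (m - 2))"
proof (intro conjI allI impI)
  fix G assume "is_GZ_G m G"
  then have "evp (G (m - 1)) qq = evp (2 * G (m - 2)) qq"
    using is_GZ_G_evp_last_eq_double assms by (simp add: evp_double)
  then show "G (m - 1) = 2 * G (m - 2)" by (rule injD[OF inj_evp_qq])
next
  fix H assume "is_GZ_H m H"
  then have "evp (H (m - 1)) qh = evp (2 * H (m - 2)) qh"
    using is_GZ_H_evp_last_eq_double assms by (simp add: evp_double)
  then show "H (m - 1) = 2 * H (m - 2)" by (rule injD[OF inj_evp_qh])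
qed

end
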